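(* For $0<q<1$, $$\log\tilde\Gamma(q)=-\log q+\tilde\gamma_0\, q+\sum_{k=2}^\infty\frac{(-1)^{k-1}\zeta_E(k)}{k}\,q^k,$$ where $\tilde\Gamma(q)=\frac1q e^{\tilde\gamma_0 q}\prod_{k=1}^\infty\left(e^{-\frac qk}\left(1+\frac qk\right)\right)^{(-1)^{k+1}}$.
   Context: $\zeta_E(z)=\sum_{n=1}^\infty(-1)^{n+1}n^{-z}$ (alternating zeta function, continued analytically in $z$). For $q>0$, $\zeta_E(z,q)=\sum_{n=0}^\infty (-1)^n (n+q)^{-z}$ for $\mathrm{Re}(z)>0$, extended analytically; the modified Stieltjes constants $\tilde\gamma_k(q)$ are defined by $\zeta_E(z,q)=\sum_{k\ge0}\frac{(-1)^k\tilde\gamma_k(q)}{k!}(z-1)^k$, and $\tilde\gamma_0:=\tilde\gamma_0(1)=\zeta_E(1)$. The modified gamma function $\tilde\Gamma$ is the function given by the product above for $q>0$; it satisfies $\frac{d}{dq}\log\tilde\Gamma(q)=-\zeta_E(1,q)$. *)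

theory Defs
  imports "HOL-Analysis.Analysis"
begin

text \<open>Alternating zeta function on real arguments s > 0, where the defining series
  sum_{n>=1} (-1)^(n+1) n^(-s) converges (conditionally for 0 < s <= 1); this
  agrees there with its analytic continuation.\<close>
definition zetaE :: "real \<Rightarrow> real" where
  "zetaE s = (\<Sum>n. (-1) ^ n / (real (Suc n)) powr s)"

definition gamma0E :: real where
  "gamma0E = zetaE 1"

definition GammaE :: "real \<Rightarrow> real" where
  "GammaE q = (1 / q) * exp (gamma0E * q) *
     (\<Prod>k. (exp (- q / real (Suc k)) * (1 + q / real (Suc k))) powr ((-1) ^ (Suc k + 1)))"

end

theory Submission
  imports Defs
begin

text \<open>Taking logarithms in the product, ln GammaE q + ln q - gamma0E q is the alternating
  series of (-1)^k (ln (1 + x_k) - x_k) with x_k = q/(k+1). Expanding each term in its Taylor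
  series gives a double series in (k, n) which, for |q| < 1, is dominated by |q|^n/(k+1)^2 and
  hence absolutely convergent. Summing it over k first instead collects, for each n, the
  alternating Dirichlet series zetaE (n + 2).\<close>

lemma summable_on_sums_imp_has_sum:
  fixes f :: "nat \<Rightarrow> 'a::{topological_comm_monoid_add, t2_space}"
  assumes "f summable_on UNIV" and "f sums S"
  shows "(f has_sum S) UNIV"
  using has_sum_infsum[OF assms(1)] has_sum_imp_sums sums_unique2 assms(2) by metis

lemma sums_rows_columns_of_summable_on:
  fixes f :: "nat \<Rightarrow> nat \<Rightarrow> real"
  assumes summable: "(\<lambda>(m, n). f m n) summable_on UNIV \<times> UNIV"
    and rows: "\<And>m. f m sums r m"
    and columns: "\<And>n. (\<lambda>m. f m n) sums c n"
  obtains S where "r sums S" and "c sums S"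
proof -
  from summable obtain S where S: "((\<lambda>(m, n). f m n) has_sum S) (UNIV \<times> UNIV)"
    by (auto simp: summable_on_def)
  have summable': "(\<lambda>(n, m). f m n) summable_on UNIV \<times> UNIV"
    using summable summable_on_swap by fastforce
  have "(r has_sum S) UNIV"
  proof (rule has_sum_SigmaD[OF S])
    show "((\<lambda>n. case (m, n) of (m, n) \<Rightarrow> f m n) has_sum r m) UNIV" for m
      using summable_on_sums_imp_has_sum[OF summable_on_SigmaD1[OF summable] rows] by simp
  qed
  moreover have "(c has_sum S) UNIV"
  proof (rule has_sum_SigmaD)
    show "((\<lambda>(n, m). f m n) has_sum S) (UNIV \<times> UNIV)"
      using S has_sum_swap by fastforce
    show "((\<lambda>m. case (n, m) of (n, m) \<Rightarrow> f m n) has_sum c n) UNIV" for n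
      using summable_on_sums_imp_has_sum[OF summable_on_SigmaD1[OF summable'] columns] by simp
  qed
  ultimately show ?thesis using that has_sum_imp_sums by blast
qed

lemma summable_on_times_nonneg:
  fixes a b :: "nat \<Rightarrow> real"
  assumes "summable a" "summable b" "\<And>m. a m \<ge> 0" "\<And>n. b n \<ge> 0"
  shows "(\<lambda>(m, n). a m * b n) summable_on UNIV \<times> UNIV"
proof (rule summable_on_SigmaI)
  show "((\<lambda>n. case (m, n) of (m, n) \<Rightarrow> a m * b n) has_sum a m * suminf b) UNIV" for m
    using has_sum_cmult_right[OF sums_nonneg_imp_has_sum[OF summable_sums]] assms by simp
  show "(\<lambda>m. a m * suminf b) summable_on UNIV"
    using assms by (intro summable_nonneg_imp_summable_on summable_mult2 mult_nonneg_nonneg suminf_nonneg)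
qed (use assms in auto)

lemma zetaE_sums:
  assumes "s > 0"
  shows "(\<lambda>n. (-1) ^ n / real (Suc n) powr s) sums zetaE s"
proof -
  have "summable (\<lambda>n. (-1) ^ n * real (Suc n) powr (- s))"
  proof (rule summable_Leibniz')
    show "(\<lambda>n. real (Suc n) powr (- s)) \<longlonglongrightarrow> 0"
      using assms by (intro tendsto_neg_powr filterlim_real_sequentially
          filterlim_compose[OF _ filterlim_Suc]) auto
    show "real (Suc (Suc n)) powr (- s) \<le> real (Suc n) powr (- s)" for n
      using assms by (intro powr_mono2') auto
  qed simp
  then show ?thesis
    by (simp add: zetaE_def summable_sums powr_minus_divide)
qed

lemma ln_add_one_minus_sums:
  fixes x :: real
  assumes "\<bar>x\<bar> < 1"
  shows "(\<lambda>n. (-1) ^ (n + 1) * x ^ (n + 2) / real (n + 2)) sums (ln (1 + x) - x)"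
proof -
  have "(\<lambda>m. - ((- x) ^ m) / real m) sums ln (1 + x)"
    using ln_series'[OF assms] .
  then have "(\<lambda>n. - ((- x) ^ (n + 2)) / real (n + 2)) sums (ln (1 + x) - x)"
    by (subst sums_iff_shift) (simp add: eval_nat_numeral)
  moreover have "- ((- x) ^ (n + 2)) = (-1) ^ (n + 1) * x ^ (n + 2)" for n
    by (simp add: power_minus[of x])
  ultimately show ?thesis by (simp only:)
qed

definition log_GammaE_summand :: "real \<Rightarrow> nat \<Rightarrow> nat \<Rightarrow> real" where
  "log_GammaE_summand q k n =
     (-1) ^ k * ((-1) ^ (n + 1) * (q / real (Suc k)) ^ (n + 2) / real (n + 2))"

lemma log_GammaE_summand_row_sums:
  assumes "\<bar>q\<bar> < 1"
  shows "log_GammaE_summand q k sums ((-1) ^ k * (ln (1 + q / real (Suc k)) - q / real (Suc k)))"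
proof -
  have "\<bar>q / real (Suc k)\<bar> < 1"
    using assms by (simp add: field_simps)
  from sums_mult[OF ln_add_one_minus_sums[OF this], of "(-1) ^ k"] show ?thesis
    by (simp add: log_GammaE_summand_def[abs_def])
qed

lemma log_GammaE_summand_column_sums:
  "(\<lambda>k. log_GammaE_summand q k n) sums
     ((-1) ^ (n + 1) * zetaE (real (n + 2)) / real (n + 2) * q ^ (n + 2))"
proof -
  have pow: "real (Suc k) powr real (n + 2) = real (Suc k) ^ (n + 2)" for k
    by (rule powr_realpow) simp
  have "(\<lambda>k. (-1) ^ k / real (Suc k) ^ (n + 2)) sums zetaE (real (n + 2))"
    using zetaE_sums[of "real (n + 2)"] unfolding pow by simp
  then have "(\<lambda>k. (-1) ^ (n + 1) * q ^ (n + 2) / real (n + 2) * ((-1) ^ k / real (Suc k) ^ (n + 2)))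
      sums ((-1) ^ (n + 1) * q ^ (n + 2) / real (n + 2) * zetaE (real (n + 2)))"
    by (rule sums_mult)
  then show ?thesis
    by (simp add: log_GammaE_summand_def power_divide mult_ac)
qed

lemma summable_on_log_GammaE_summand:
  assumes "\<bar>q\<bar> < 1"
  shows "(\<lambda>(k, n). log_GammaE_summand q k n) summable_on UNIV \<times> UNIV"
proof -
  have "summable (\<lambda>k. inverse (real k ^ 2))"
    by (rule inverse_power_summable) simp
  then have inverse_squares: "summable (\<lambda>k. 1 / real (Suc k) ^ 2)"
    by (subst (asm) summable_Suc_iff[symmetric]) (simp add: divide_inverse)
  have majorant: "(\<lambda>(k, n). 1 / real (Suc k) ^ 2 * \<bar>q\<bar> ^ n) summable_on UNIV \<times> UNIV"
    using assms by (intro summable_on_times_nonneg inverse_squares summable_geometric) auto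
  have bound: "\<bar>log_GammaE_summand q k n\<bar> \<le> 1 / real (Suc k) ^ 2 * \<bar>q\<bar> ^ n" for k n
  proof -
    have "\<bar>log_GammaE_summand q k n\<bar> = \<bar>q\<bar> ^ 2 * \<bar>q\<bar> ^ n / (real (n + 2) * real (Suc k) ^ (n + 2))"
      by (simp add: log_GammaE_summand_def abs_mult power_abs power_divide power_add power2_eq_square mult_ac)
    also have "\<dots> \<le> \<bar>q\<bar> ^ n / real (Suc k) ^ 2"
    proof (rule frac_le)
      show "\<bar>q\<bar> ^ 2 * \<bar>q\<bar> ^ n \<le> \<bar>q\<bar> ^ n"
        using assms by (intro mult_left_le_one_le power_le_one) auto
      have "real (Suc k) ^ 2 \<le> real (Suc k) ^ (n + 2)"
        by (rule power_increasing) auto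
      also have "\<dots> \<le> real (n + 2) * real (Suc k) ^ (n + 2)"
        using mult_right_mono[of 1 "real (n + 2)" "real (Suc k) ^ (n + 2)"] by simp
      finally show "real (Suc k) ^ 2 \<le> real (n + 2) * real (Suc k) ^ (n + 2)" .
    qed auto
    finally show ?thesis by simp
  qed
  show ?thesis
  proof (rule summable_on_iff_abs_summable_on_real[THEN iffD2],
      rule summable_on_comparison_test[OF majorant])
    show "norm (case p of (k, n) \<Rightarrow> log_GammaE_summand q k n)
        \<le> (case p of (k, n) \<Rightarrow> 1 / real (Suc k) ^ 2 * \<bar>q\<bar> ^ n)" for p
      using bound[of "fst p" "snd p"] by (simp add: case_prod_beta)
  qed simp
qed

lemma GammaE_factor_eq_exp:
  fixes x :: real
  assumes "x > -1"
  shows "(exp (- x) * (1 + x)) powr ((-1) ^ (Suc k + 1)) = exp ((-1) ^ k * (ln (1 + x) - x))"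
proof -
  have "ln (exp (- x) * (1 + x)) = ln (1 + x) - x"
    using assms by (simp add: ln_mult_pos)
  with assms show ?thesis by (simp add: powr_def)
qed

lemma ln_GammaE_eq_sum:
  assumes "q > 0"
    and "(\<lambda>k. (-1) ^ k * (ln (1 + q / real (Suc k)) - q / real (Suc k))) sums S"
  shows "ln (GammaE q) = S - ln q + gamma0E * q"
proof -
  have factor: "(exp (- q / real (Suc k)) * (1 + q / real (Suc k))) powr ((-1) ^ (Suc k + 1))
      = exp ((-1) ^ k * (ln (1 + q / real (Suc k)) - q / real (Suc k)))" for k
  proof -
    have "0 < q / real (Suc k)"
      using assms(1) by simp
    then have "-1 < q / real (Suc k)"
      by linarith
    from GammaE_factor_eq_exp[OF this, of k] show ?thesis
      by (simp only: minus_divide_left)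
  qed
  have "(\<Prod>k. (exp (- q / real (Suc k)) * (1 + q / real (Suc k))) powr ((-1) ^ (Suc k + 1))) = exp S"
    unfolding factor prodinf_exp[OF sums_summable[OF assms(2)]] sums_unique[OF assms(2), symmetric] ..
  then have "GammaE q = 1 / q * exp (gamma0E * q) * exp S"
    by (simp add: GammaE_def)
  with assms(1) show ?thesis
    by (simp add: ln_mult ln_div)
qed

theorem corollary3p13:
  fixes q :: real
  assumes "0 < q" and "q < 1"
  shows "(\<lambda>n. (-1) ^ (n + 1) * zetaE (real (n + 2)) / real (n + 2) * q ^ (n + 2))
           sums (ln (GammaE q) + ln q - gamma0E * q)"
proof -
  have "\<bar>q\<bar> < 1" using assms by simp
  obtain S
    where rows: "(\<lambda>k. (-1) ^ k * (ln (1 + q / real (Suc k)) - q / real (Suc k))) sums S"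
      and columns: "(\<lambda>n. (-1) ^ (n + 1) * zetaE (real (n + 2)) / real (n + 2) * q ^ (n + 2)) sums S"
    using sums_rows_columns_of_summable_on[OF summable_on_log_GammaE_summand[OF \<open>\<bar>q\<bar> < 1\<close>]
        log_GammaE_summand_row_sums[OF \<open>\<bar>q\<bar> < 1\<close>] log_GammaE_summand_column_sums] .
  have "ln (GammaE q) = S - ln q + gamma0E * q"
    using ln_GammaE_eq_sum[OF assms(1) rows] .
  with columns show ?thesis by simp
qed

end
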